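(* Consider the boundary-driven constrained lattice gas on the two-dimensional cylinder $\Lambda = [1,L]\times \mathbb{Z}/L\mathbb{Z}$, with boundary $\partial \Lambda = \{1,L\}\times \mathbb{Z}/L\mathbb{Z}$. Set the left reservoir to $\alpha_\ell$ and the right reservoir to $\alpha_r$, i.e. $\alpha(i)=\alpha_\ell$ if $i\in\{1\}\times\mathbb{Z}/L\mathbb{Z}$ and $\alpha(i)=\alpha_r$ if $i\in\{L\}\times\mathbb{Z}/L\mathbb{Z}$. Then, for every $(i_1,i_2)\in\Lambda$, \[ \rho_a(i_1,i_2) = \alpha_\ell + (\alpha_r-\alpha_\ell)\frac{i_1}{L+1}. \]
   Context: Configurations are $\eta\in\{0,1\}^{\Lambda}$, with $\eta_i=1$ meaning site $i$ is occupied. A particle at $i$ is active if at least one neighbouring site is occupied; set $A_i=\eta_i\,\mathbf 1_{\{\sum_{j'\sim i}\eta_{j'}>0\}}$, where sites outside $\Lambda$ are treated as always occupied ($\eta\equiv1$ on $\Lambda^c$), so boundary particles are always active. The dynamics has generator $\mathscr L=\mathscr L_{bulk}+\mathscr L_{boundary}$ with $\mathscr L_{bulk}f(\eta)=\sum_{i\in\Lambda}\sum_{j\in\Lambda,\,j\sim i}A_i(1-\eta_j)\{f(\eta^{i,j})-f(\eta)\}$ ($\eta^{i,j}$: the particle at $i$ jumps to $j$), and $\mathscr L_{boundary}f(\eta)=\sum_{i\in\partial\Lambda}\big(\alpha(i)f(\eta^{i\leftarrow1})+(1-\alpha(i))f(\eta^{i\leftarrow0})-f(\eta)\big)$ (resampling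 the occupation of boundary site $i$ as a Bernoulli($\alpha(i)$) variable), where $\alpha:\partial\Lambda\to(0,1)$. Let $\pi_\alpha$ be the unique stationary measure and $\rho_a(i)=\mathbb E_{\pi_\alpha}[A_i]$ for $i\in\Lambda$. The paper's theorem shows that $\rho_a$ is discrete-harmonic in $\Lambda$, i.e. $\sum_{j\sim i}(\rho_a(j)-\rho_a(i))=0$ for all $i\in\Lambda$ (sum over neighbours $j$ in $\Lambda$ and in the mirror boundary $\{i\in\mathbb Z^d: d(i,\Lambda)=1\}$), with Dirichlet data $\rho_a(i^* )=\alpha(i)$ at the mirror site $i^*$ adjacent to boundary site $i$; the corollary follows by solving this Dirichlet problem on the cylinder (mirror sites at $i_1=0$ and $i_1=L+1$). *)

theory Defs
  imports Complex_Main
begin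

text \<open>Sites of the cylinder [1,L] x Z/LZ are pairs (i1,i2) with 1 <= i1 <= L and
  0 <= i2 < L (i2 represents a residue class mod L).  A configuration eta in {0,1}^Lambda
  is represented by its set of occupied sites, a subset of the cylinder.\<close>

definition cyl :: "nat \<Rightarrow> (nat \<times> nat) set" where
  "cyl L = {1..L} \<times> {0..<L}"

definition cyl_bdry :: "nat \<Rightarrow> (nat \<times> nat) set" where
  "cyl_bdry L = {1, L} \<times> {0..<L}"

definition cyl_adj :: "nat \<Rightarrow> nat \<times> nat \<Rightarrow> nat \<times> nat \<Rightarrow> bool" where
  "cyl_adj L i j \<longleftrightarrow> i \<noteq> j \<and>
     ((snd i = snd j \<and> (fst j = fst i + 1 \<or> fst i = fst j + 1)) \<or>
      (fst i = fst j \<and> (snd j = (snd i + 1) mod L \<or> snd i = (snd j + 1) mod L)))"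

text \<open>Activity A_i(eta): particle at i with at least one occupied neighbour, where sites
  outside Lambda count as occupied.  A site of the cylinder has a neighbour in Z x Z/LZ
  outside the cylinder exactly when it lies on the boundary {1,L} x Z/LZ.\<close>
definition active :: "nat \<Rightarrow> (nat \<times> nat) set \<Rightarrow> nat \<times> nat \<Rightarrow> real" where
  "active L eta i =
     (if i \<in> eta \<and> (i \<in> cyl_bdry L \<or> (\<exists>j\<in>cyl L. cyl_adj L i j \<and> j \<in> eta)) then 1 else 0)"

definition jump :: "(nat \<times> nat) set \<Rightarrow> nat \<times> nat \<Rightarrow> nat \<times> nat \<Rightarrow> (nat \<times> nat) set" where
  "jump eta i j = insert j (eta - {i})"

definition gen :: "nat \<Rightarrow> (nat \<times> nat \<Rightarrow> real) \<Rightarrow> ((nat \<times> nat) set \<Rightarrow> real)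
                    \<Rightarrow> (nat \<times> nat) set \<Rightarrow> real" where
  "gen L \<alpha> f eta =
     (\<Sum>i\<in>cyl L. \<Sum>j\<in>{j\<in>cyl L. cyl_adj L i j}.
        active L eta i * (if j \<in> eta then 0 else 1) * (f (jump eta i j) - f eta))
   + (\<Sum>i\<in>cyl_bdry L. \<alpha> i * f (insert i eta) + (1 - \<alpha> i) * f (eta - {i}) - f eta)"

definition stationary :: "nat \<Rightarrow> (nat \<times> nat \<Rightarrow> real) \<Rightarrow> ((nat \<times> nat) set \<Rightarrow> real) \<Rightarrow> bool" where
  "stationary L \<alpha> \<pi> \<longleftrightarrow>
     (\<forall>eta\<in>Pow (cyl L). 0 \<le> \<pi> eta) \<and> (\<Sum>eta\<in>Pow (cyl L). \<pi> eta) = 1 \<and>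
     (\<forall>f. (\<Sum>eta\<in>Pow (cyl L). \<pi> eta * gen L \<alpha> f eta) = 0)"

definition rho_a :: "nat \<Rightarrow> ((nat \<times> nat) set \<Rightarrow> real) \<Rightarrow> nat \<times> nat \<Rightarrow> real" where
  "rho_a L \<pi> i = (\<Sum>eta\<in>Pow (cyl L). \<pi> eta * active L eta i)"

definition cyl_alpha :: "nat \<Rightarrow> real \<Rightarrow> real \<Rightarrow> nat \<times> nat \<Rightarrow> real" where
  "cyl_alpha L al ar i = (if fst i = 1 then al else ar)"

end

theory Submission
  imports Defs
begin

text \<open>Testing the stationarity of \<open>\<pi>\<close> against the occupation variable of a site \<open>i\<close>
  turns \<open>\<rho>\<^sub>a = E\<^sub>\<pi>[A]\<close> into a solution of a discrete Dirichlet problem: for neighbours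
  \<open>a, i\<close> the kinetic constraint gives \<open>A\<^sub>a \<eta>\<^sub>i = \<eta>\<^sub>a \<eta>\<^sub>i = A\<^sub>i \<eta>\<^sub>a\<close>, so the net current
  \<open>A\<^sub>a (1 - \<eta>\<^sub>i) - A\<^sub>i (1 - \<eta>\<^sub>a)\<close> is the gradient \<open>A\<^sub>a - A\<^sub>i\<close>, and the reservoirs
  contribute the Dirichlet data \<open>\<alpha>\<close>.  By the maximum principle this Dirichlet problem on
  the cylinder has at most one solution, and the profile that is affine in the first
  coordinate, with values \<open>\<alpha>\<^sub>l\<close> at \<open>i\<^sub>1 = 0\<close> and \<open>\<alpha>\<^sub>r\<close> at \<open>i\<^sub>1 = L + 1\<close>, is one.\<close>

definition cyl_nbrs :: "nat \<Rightarrow> nat \<times> nat \<Rightarrow> (nat \<times> nat) set" where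
  "cyl_nbrs L i = {j \<in> cyl L. cyl_adj L i j}"

text \<open>The boundary term is the edge from \<open>i\<close> to its mirror site \<open>i\<^sup>*\<close>, where the
  Dirichlet data \<open>\<alpha> i\<close> is imposed.\<close>
definition dirichlet_laplacian ::
    "nat \<Rightarrow> (nat \<times> nat \<Rightarrow> real) \<Rightarrow> (nat \<times> nat \<Rightarrow> real) \<Rightarrow> nat \<times> nat \<Rightarrow> real" where
  "dirichlet_laplacian L \<alpha> u i =
     (\<Sum>a\<in>cyl_nbrs L i. u a - u i) + (if i \<in> cyl_bdry L then \<alpha> i - u i else 0)"

lemma cyl_adj_sym: "cyl_adj L i j \<longleftrightarrow> cyl_adj L j i"
  by (auto simp: cyl_adj_def)

lemma finite_cyl [simp]: "finite (cyl L)"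
  by (simp add: cyl_def)

lemma finite_cyl_bdry [simp]: "finite (cyl_bdry L)"
  by (simp add: cyl_bdry_def)

lemma finite_cyl_nbrs [simp]: "finite (cyl_nbrs L i)"
  by (simp add: cyl_nbrs_def)

lemma jump_occupation_change:
  assumes "cyl_adj L a b"
  shows "active L eta a * (if b \<in> eta then 0 else 1) *
          ((if i \<in> jump eta a b then 1 else 0) - (if i \<in> eta then 1 else 0)) =
         (if b = i then active L eta a * (if i \<in> eta then 0 else 1) else 0)
       - (if a = i then active L eta i * (if b \<in> eta then 0 else 1) else 0)"
proof -
  have "a \<noteq> b"
    using assms by (simp add: cyl_adj_def)
  moreover have "active L eta a = 0 \<or> (active L eta a = 1 \<and> a \<in> eta)"
    by (simp add: active_def)
  ultimately show ?thesis
    by (cases "b \<in> eta"; cases "i = a"; cases "i = b"; auto simp: jump_def)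
qed

lemma current_eq_active_gradient:
  assumes "i \<in> cyl L" "a \<in> cyl_nbrs L i"
  shows "active L eta a * (if i \<in> eta then 0 else 1) - active L eta i * (if a \<in> eta then 0 else 1)
     = active L eta a - active L eta i"
  using assms cyl_adj_sym[of L i a]
  by (cases "i \<in> eta"; cases "a \<in> eta") (auto simp: active_def cyl_nbrs_def)

lemma bulk_occupation_change:
  assumes "i \<in> cyl L"
  shows "(\<Sum>a\<in>cyl L. \<Sum>b\<in>cyl_nbrs L a.
            active L eta a * (if b \<in> eta then 0 else 1) *
              ((if i \<in> jump eta a b then 1 else 0) - (if i \<in> eta then 1 else 0)))
       = (\<Sum>a\<in>cyl_nbrs L i. active L eta a - active L eta i)"
proof -
  let ?gain = "\<lambda>a. active L eta a * (if i \<in> eta then 0 else 1)"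
  let ?loss = "\<lambda>b. active L eta i * (if b \<in> eta then 0 else 1)"
  have "(\<Sum>a\<in>cyl L. \<Sum>b\<in>cyl_nbrs L a.
            active L eta a * (if b \<in> eta then 0 else 1) *
              ((if i \<in> jump eta a b then 1 else 0) - (if i \<in> eta then 1 else 0)))
      = (\<Sum>a\<in>cyl L. \<Sum>b\<in>cyl_nbrs L a.
            (if b = i then ?gain a else 0) - (if a = i then ?loss b else 0))"
    by (intro sum.cong refl) (simp add: jump_occupation_change cyl_nbrs_def)
  also have "\<dots> = (\<Sum>a\<in>cyl L. \<Sum>b\<in>cyl_nbrs L a. if b = i then ?gain a else 0)
      - (\<Sum>a\<in>cyl L. \<Sum>b\<in>cyl_nbrs L a. if a = i then ?loss b else 0)"
    by (simp only: sum_subtractf)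
  also have "(\<Sum>a\<in>cyl L. \<Sum>b\<in>cyl_nbrs L a. if b = i then ?gain a else 0)
      = (\<Sum>a\<in>cyl L. if cyl_adj L a i then ?gain a else 0)"
    using assms by (intro sum.cong refl) (simp add: sum.delta' cyl_nbrs_def)
  also have "\<dots> = (\<Sum>a\<in>cyl_nbrs L i. ?gain a)"
    by (simp add: cyl_nbrs_def sum.inter_filter cyl_adj_sym)
  also have "(\<Sum>a\<in>cyl L. \<Sum>b\<in>cyl_nbrs L a. if a = i then ?loss b else 0)
      = (\<Sum>b\<in>cyl_nbrs L i. ?loss b)"
  proof -
    have "(\<Sum>a\<in>cyl L. \<Sum>b\<in>cyl_nbrs L a. if a = i then ?loss b else 0)
        = (\<Sum>a\<in>cyl L. if a = i then (\<Sum>b\<in>cyl_nbrs L a. ?loss b) else 0)"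
      by (intro sum.cong refl) simp
    then show ?thesis
      using assms by simp
  qed
  also have "(\<Sum>a\<in>cyl_nbrs L i. ?gain a) - (\<Sum>b\<in>cyl_nbrs L i. ?loss b)
      = (\<Sum>a\<in>cyl_nbrs L i. active L eta a - active L eta i)"
    unfolding sum_subtractf[symmetric] using assms
    by (intro sum.cong refl) (rule current_eq_active_gradient)
  finally show ?thesis .
qed

lemma gen_occupation:
  assumes "i \<in> cyl L"
  shows "gen L \<alpha> (\<lambda>e. if i \<in> e then 1 else 0) eta = dirichlet_laplacian L \<alpha> (active L eta) i"
proof -
  have "(\<Sum>k\<in>cyl_bdry L. \<alpha> k * (if i \<in> insert k eta then 1 else 0)
          + (1 - \<alpha> k) * (if i \<in> eta - {k} then 1 else 0) - (if i \<in> eta then 1 else 0))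
      = (\<Sum>k\<in>cyl_bdry L. if k = i then \<alpha> i - (if i \<in> eta then 1 else 0) else (0::real))"
    by (intro sum.cong refl) (auto simp: algebra_simps)
  also have "\<dots> = (if i \<in> cyl_bdry L then \<alpha> i - active L eta i else 0)"
    \<comment> \<open>boundary particles are always active\<close>
    by (simp add: active_def)
  finally show ?thesis
    using assms bulk_occupation_change[OF assms, of eta]
    by (simp add: gen_def dirichlet_laplacian_def cyl_nbrs_def)
qed

lemma dirichlet_laplacian_rho_a:
  assumes st: "stationary L \<alpha> \<pi>" and i: "i \<in> cyl L"
  shows "dirichlet_laplacian L \<alpha> (rho_a L \<pi>) i = 0"
proof -
  have total: "(\<Sum>eta\<in>Pow (cyl L). \<pi> eta) = 1"
    and balance: "(\<Sum>eta\<in>Pow (cyl L). \<pi> eta * gen L \<alpha> (\<lambda>e. if i \<in> e then 1 else 0) eta) = 0"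
    using st by (auto simp: stationary_def)
  have "(\<Sum>eta\<in>Pow (cyl L). \<pi> eta * dirichlet_laplacian L \<alpha> (active L eta) i)
      = (\<Sum>a\<in>cyl_nbrs L i. \<Sum>eta\<in>Pow (cyl L). \<pi> eta * active L eta a - \<pi> eta * active L eta i)
        + (if i \<in> cyl_bdry L
           then \<alpha> i * (\<Sum>eta\<in>Pow (cyl L). \<pi> eta) - (\<Sum>eta\<in>Pow (cyl L). \<pi> eta * active L eta i)
           else 0)"
    by (simp add: dirichlet_laplacian_def algebra_simps sum.distrib sum_subtractf sum_distrib_left
        sum.swap[where A = "Pow (cyl L)"])
  also have "\<dots> = dirichlet_laplacian L \<alpha> (rho_a L \<pi>) i"
    by (simp add: dirichlet_laplacian_def rho_a_def total sum_subtractf)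
  finally show ?thesis
    using balance i by (simp add: gen_occupation)
qed

lemma dirichlet_laplacian_diff:
  "dirichlet_laplacian L \<alpha> u i - dirichlet_laplacian L \<alpha> v i
     = dirichlet_laplacian L (\<lambda>_. 0) (\<lambda>j. u j - v j) i"
proof -
  have "(\<Sum>a\<in>cyl_nbrs L i. u a - u i) - (\<Sum>a\<in>cyl_nbrs L i. v a - v i)
      = (\<Sum>a\<in>cyl_nbrs L i. (u a - v a) - (u i - v i))"
    by (simp only: sum_subtractf[symmetric]) (intro sum.cong; simp)
  then show ?thesis
    by (simp add: dirichlet_laplacian_def)
qed

text \<open>Either the edge to the mirror site (if \<open>i\<close> lies in the first column) or the edge
  to the strictly smaller left neighbour contributes a negative term.\<close>
lemma dirichlet_laplacian_neg_at_leftmost_max: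
  fixes d :: "nat \<times> nat \<Rightarrow> real"
  assumes i: "i \<in> cyl L" and pos: "d i > 0" and max: "\<And>j. j \<in> cyl L \<Longrightarrow> d j \<le> d i"
    and leftmost: "\<And>j. j \<in> cyl L \<Longrightarrow> fst j < fst i \<Longrightarrow> d j < d i"
  shows "dirichlet_laplacian L (\<lambda>_. 0) d i < 0"
proof -
  have terms_nonpos: "\<And>a. a \<in> cyl_nbrs L i \<Longrightarrow> d a - d i \<le> 0"
    using max by (auto simp: cyl_nbrs_def)
  then have nbrs_nonpos: "(\<Sum>a\<in>cyl_nbrs L i. d a - d i) \<le> 0"
    by (intro sum_nonpos) auto
  obtain i1 i2 where i_eq: "i = (i1, i2)"
    by (cases i)
  show ?thesis
  proof (cases "i1 = 1")
    case True
    then have "i \<in> cyl_bdry L"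
      using i by (auto simp: i_eq cyl_def cyl_bdry_def)
    then show ?thesis
      using nbrs_nonpos pos by (simp add: dirichlet_laplacian_def)
  next
    case False
    define j where "j = (i1 - 1, i2)"
    have j: "j \<in> cyl_nbrs L i"
      using i False by (auto simp: j_def i_eq cyl_nbrs_def cyl_def cyl_adj_def)
    then have "d j < d i"
      using False i by (intro leftmost) (auto simp: cyl_nbrs_def cyl_def j_def i_eq)
    then have "(\<Sum>a\<in>cyl_nbrs L i. d a - d i) < 0"
      using j sum_nonpos[of "cyl_nbrs L i - {j}" "\<lambda>a. d a - d i"] terms_nonpos
      by (simp add: sum.remove)
    then show ?thesis
      using pos by (simp add: dirichlet_laplacian_def)
  qed
qed

lemma dirichlet_subharmonic_nonpos:
  fixes d :: "nat \<times> nat \<Rightarrow> real"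
  assumes subharmonic: "\<And>i. i \<in> cyl L \<Longrightarrow> dirichlet_laplacian L (\<lambda>_. 0) d i \<ge> 0"
    and j: "j \<in> cyl L"
  shows "d j \<le> 0"
proof (rule ccontr)
  assume "\<not> d j \<le> 0"
  define M where "M = Max (d ` cyl L)"
  have le_M: "\<And>k. k \<in> cyl L \<Longrightarrow> d k \<le> M"
    by (simp add: M_def)
  have "M \<in> d ` cyl L"
    unfolding M_def using j by (intro Max_in) auto
  then have S_nonempty: "{k \<in> cyl L. d k = M} \<noteq> {}"
    by auto
  define m where "m = Min (fst ` {k \<in> cyl L. d k = M})"
  have "m \<in> fst ` {k \<in> cyl L. d k = M}"
    unfolding m_def using S_nonempty by (intro Min_in) auto
  then obtain i where i: "i \<in> cyl L" "d i = M" "fst i = m"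
    by auto
  have "dirichlet_laplacian L (\<lambda>_. 0) d i < 0"
  proof (rule dirichlet_laplacian_neg_at_leftmost_max)
    show "d i > 0"
      using le_M[OF j] \<open>\<not> d j \<le> 0\<close> i by simp
    show "\<And>k. k \<in> cyl L \<Longrightarrow> d k \<le> d i"
      using le_M i by simp
    fix k
    assume k: "k \<in> cyl L" "fst k < fst i"
    have "d k \<noteq> M"
    proof
      assume "d k = M"
      then have "m \<le> fst k"
        unfolding m_def using k by (intro Min_le) auto
      with k i show False
        by simp
    qed
    then show "d k < d i"
      using le_M[OF k(1)] i by simp
  qed (use i in simp)
  with subharmonic[OF i(1)] show False
    by simp
qed

lemma dirichlet_problem_unique:
  assumes "\<And>i. i \<in> cyl L \<Longrightarrow> dirichlet_laplacian L \<alpha> u i = 0"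
    and "\<And>i. i \<in> cyl L \<Longrightarrow> dirichlet_laplacian L \<alpha> v i = 0"
    and "i \<in> cyl L"
  shows "u i = v i"
proof -
  have "\<And>k. k \<in> cyl L \<Longrightarrow> dirichlet_laplacian L (\<lambda>_. 0) (\<lambda>j. u j - v j) k = 0"
    and "\<And>k. k \<in> cyl L \<Longrightarrow> dirichlet_laplacian L (\<lambda>_. 0) (\<lambda>j. v j - u j) k = 0"
    using assms(1,2) dirichlet_laplacian_diff by (metis diff_self)+
  then show ?thesis
    using dirichlet_subharmonic_nonpos[of L "\<lambda>j. u j - v j" i]
      dirichlet_subharmonic_nonpos[of L "\<lambda>j. v j - u j" i] assms(3)
    by simp
qed

lemma cyl_nbrs_off_column:
  assumes "(i1, i2) \<in> cyl L"
  shows "{a \<in> cyl_nbrs L (i1, i2). fst a \<noteq> i1} =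
     (if i1 < L then {(i1 + 1, i2)} else {}) \<union> (if 1 < i1 then {(i1 - 1, i2)} else {})"
  using assms by (auto simp: cyl_nbrs_def cyl_def cyl_adj_def split: if_splits)

lemma dirichlet_laplacian_affine_profile:
  fixes L :: nat and al ar :: real
  defines "\<phi> \<equiv> \<lambda>j. al + (ar - al) * real (fst j) / real (L + 1)"
  assumes L: "L \<ge> 2" and i: "(i1, i2) \<in> cyl L"
  shows "dirichlet_laplacian L (cyl_alpha L al ar) \<phi> (i1, i2) = 0"
proof -
  let ?H = "{a \<in> cyl_nbrs L (i1, i2). fst a \<noteq> i1}"
  have "(\<Sum>a\<in>cyl_nbrs L (i1, i2). \<phi> a - \<phi> (i1, i2))
      = (\<Sum>a\<in>cyl_nbrs L (i1, i2). if fst a \<noteq> i1 then \<phi> a - \<phi> (i1, i2) else 0)"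
    by (intro sum.cong refl) (auto simp: \<phi>_def)
  also have "\<dots> = (\<Sum>a\<in>?H. \<phi> a - \<phi> (i1, i2))"
    by (simp add: sum.inter_filter)
  finally have off_column: "dirichlet_laplacian L (cyl_alpha L al ar) \<phi> (i1, i2)
      = (\<Sum>a\<in>?H. \<phi> a - \<phi> (i1, i2))
        + (if (i1, i2) \<in> cyl_bdry L then cyl_alpha L al ar (i1, i2) - \<phi> (i1, i2) else 0)"
    by (simp add: dirichlet_laplacian_def)
  have r: "1 \<le> i1" "i1 \<le> L" "i2 < L"
    using i by (auto simp: cyl_def)
  define c where "c = (ar - al) / real (L + 1)"
  have \<phi>_affine: "\<And>j. \<phi> j = al + c * real (fst j)" and ar: "ar = al + c * (real L + 1)"
    by (simp_all add: \<phi>_def c_def add.commute[of 1])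
  consider "i1 = 1" | "1 < i1" "i1 < L" | "i1 = L"
    using r by linarith
  then show ?thesis
  proof cases
    case 1
    then have "(i1, i2) \<in> cyl_bdry L" "?H = {(2, i2)}"
      using r L cyl_nbrs_off_column[OF i] by (auto simp: cyl_bdry_def)
    then show ?thesis
      unfolding off_column using 1 by (simp add: \<phi>_affine cyl_alpha_def)
  next
    case 2
    then have "(i1, i2) \<notin> cyl_bdry L" "?H = {(i1 + 1, i2), (i1 - 1, i2)}"
      using cyl_nbrs_off_column[OF i] by (auto simp: cyl_bdry_def)
    then show ?thesis
      unfolding off_column using 2 by (simp add: \<phi>_affine of_nat_diff algebra_simps)
  next
    case 3
    then have "(i1, i2) \<in> cyl_bdry L" "?H = {(L - 1, i2)}"
      "cyl_alpha L al ar (i1, i2) = al + c * (real L + 1)"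
      using r L ar cyl_nbrs_off_column[OF i] by (auto simp: cyl_bdry_def cyl_alpha_def)
    then show ?thesis
      unfolding off_column using 3 L by (simp add: \<phi>_affine of_nat_diff algebra_simps)
  qed
qed

theorem mainTheorem1:
  fixes L :: nat and al ar :: real and \<pi> :: "(nat \<times> nat) set \<Rightarrow> real"
  assumes "L \<ge> 2"
    and "0 < al" and "al < 1" and "0 < ar" and "ar < 1"
    and "stationary L (cyl_alpha L al ar) \<pi>"
  shows "\<forall>i1 i2. (i1, i2) \<in> cyl L \<longrightarrow>
           rho_a L \<pi> (i1, i2) = al + (ar - al) * real i1 / real (L + 1)"
proof (intro allI impI)
  fix i1 i2
  assume "(i1, i2) \<in> cyl L"
  let ?\<phi> = "\<lambda>j. al + (ar - al) * real (fst j) / real (L + 1)"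
  have "rho_a L \<pi> (i1, i2) = ?\<phi> (i1, i2)"
  proof (rule dirichlet_problem_unique)
    show "\<And>i. i \<in> cyl L \<Longrightarrow> dirichlet_laplacian L (cyl_alpha L al ar) (rho_a L \<pi>) i = 0"
      using assms(6) by (rule dirichlet_laplacian_rho_a)
    show "\<And>i. i \<in> cyl L \<Longrightarrow> dirichlet_laplacian L (cyl_alpha L al ar) ?\<phi> i = 0"
      using assms(1) dirichlet_laplacian_affine_profile by (metis prod.collapse)
  qed fact
  then show "rho_a L \<pi> (i1, i2) = al + (ar - al) * real i1 / real (L + 1)"
    by simp
qed

end
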